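(* Let $\sigma$ and $\tau$ be compositions of a positive integer $m$ with the same number of parts. Then for every positive integer $n$, the map $\Gamma(\mathsf{hypo}_n,\sigma)\to\Gamma(\mathsf{hypo}_n,\tau)$, $T\mapsto\pi_\tau(\overline{T})$, is an isomorphism of unlabelled directed graphs.
   Context: A quasi-array of size $m$ is an array $Q$ with cells $(i,j)$, $1\le i\le m$, $1\le j\le m-i+1$, each containing a positive integer, with first row weakly increasing and $Q_{(i,j)}=Q_{(1,i+j-1)}+i-1$. A quasi-ribbon tableau of shape $\sigma=(\sigma_1,\dots,\sigma_r)$ is a filling with positive integers of the diagram having $\sigma_i$ cells in row $i$, the leftmost cell of row $i+1$ directly below the rightmost cell of row $i$, weakly increasing along rows and strictly increasing down columns; its column reading is read column by column left to right, each column bottom to top. Quasi-Kashiwara operator $f_i$ on a word $u$: undefined if $u$ contains a subsequence $(i+1)\,i$ or no letter $i$; otherwise replaces the rightmost $i$ by $i+1$. $\Gamma(\mathsf{hypo}_n,\sigma)$ is the directed graph whose vertices are the quasi-ribbon tableaux of shape $\sigma$ with entries in $\{1,\dots,n\}$ (identified with column readings), with an edge $u\to f_i(u)$ labelled $i$, $1\le i\le n-1$, whenever defined. For a quasi-array $Q$ of size $m$ and composition $\tau$ of $m$, $\pi_\tau(Q)$ is the quasi-ribbon tableau formed by the cells of $Q$ making up a quasi-ribbon diagram of shape $\tau$ with first cell $(1,1)$; for a quasi-ribbon tableau $T$ of shape $\sigma$ with $m$ cells, $\overline{T}$ is the unique quasi-array of size $m$ with $\pi_\sigma(\overline{T})=T$.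 *)

theory Defs
  imports Main
begin

definition is_composition :: "nat \<Rightarrow> nat list \<Rightarrow> bool" where
  "is_composition m \<sigma> \<longleftrightarrow> (\<forall>x\<in>set \<sigma>. 0 < x) \<and> sum_list \<sigma> = m"

text \<open>Cells are pairs (row, column), 1-indexed. Row i of the quasi-ribbon diagram of
  shape sigma starts in column ribbon_start sigma i: row 1 starts in column 1 and the
  leftmost cell of row i+1 lies directly below the rightmost cell of row i.\<close>
definition ribbon_start :: "nat list \<Rightarrow> nat \<Rightarrow> nat" where
  "ribbon_start \<sigma> i = 1 + (\<Sum>k<i - 1. \<sigma> ! k - 1)"

definition ribbon_cells :: "nat list \<Rightarrow> (nat \<times> nat) set" where
  "ribbon_cells \<sigma> = {(i, j). 1 \<le> i \<and> i \<le> length \<sigma> \<and>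
      ribbon_start \<sigma> i \<le> j \<and> j < ribbon_start \<sigma> i + \<sigma> ! (i - 1)}"

text \<open>Fillings are functions on cells; by convention they are 0 outside the diagram.\<close>
type_synonym filling = "nat \<times> nat \<Rightarrow> nat"

definition is_qrt :: "nat \<Rightarrow> nat list \<Rightarrow> filling \<Rightarrow> bool" where
  "is_qrt n \<sigma> T \<longleftrightarrow>
     (\<forall>c. c \<notin> ribbon_cells \<sigma> \<longrightarrow> T c = 0) \<and>
     (\<forall>c\<in>ribbon_cells \<sigma>. 1 \<le> T c \<and> T c \<le> n) \<and>
     (\<forall>i j. (i, j) \<in> ribbon_cells \<sigma> \<and> (i, Suc j) \<in> ribbon_cells \<sigma> \<longrightarrow> T (i, j) \<le> T (i, Suc j)) \<and>
     (\<forall>i j. (i, j) \<in> ribbon_cells \<sigma> \<and> (Suc i, j) \<in> ribbon_cells \<sigma> \<longrightarrow> T (i, j) < T (Suc i, j))"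

text \<open>Column reading: columns left to right, each column bottom to top.
  (All columns of the diagram lie in 1..sum sigma.)\<close>
definition col_reading :: "nat list \<Rightarrow> filling \<Rightarrow> nat list" where
  "col_reading \<sigma> T = concat (map (\<lambda>j. map (\<lambda>i. T (i, j))
        (filter (\<lambda>i. (i, j) \<in> ribbon_cells \<sigma>) (rev [1..<Suc (length \<sigma>)])))
      [1..<Suc (sum_list \<sigma>)])"

definition quasi_f :: "nat \<Rightarrow> nat list \<Rightarrow> nat list option" where
  "quasi_f i u =
     (if (\<exists>p q. p < q \<and> q < length u \<and> u ! p = Suc i \<and> u ! q = i) \<or> i \<notin> set u then None
      else Some (u[(GREATEST p. p < length u \<and> u ! p = i) := Suc i]))"

definition hypo_vertices :: "nat \<Rightarrow> nat list \<Rightarrow> filling set" where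
  "hypo_vertices n \<sigma> = {T. is_qrt n \<sigma> T}"

text \<open>Vertices are identified with their column readings; edge u -> f_i(u), 1 <= i <= n-1.\<close>
definition hypo_edges :: "nat \<Rightarrow> nat list \<Rightarrow> (filling \<times> filling) set" where
  "hypo_edges n \<sigma> = {(T, T'). T \<in> hypo_vertices n \<sigma> \<and> T' \<in> hypo_vertices n \<sigma> \<and>
      (\<exists>i. 1 \<le> i \<and> i \<le> n - 1 \<and> quasi_f i (col_reading \<sigma> T) = Some (col_reading \<sigma> T'))}"

definition qa_cells :: "nat \<Rightarrow> (nat \<times> nat) set" where
  "qa_cells m = {(i, j). 1 \<le> i \<and> i \<le> m \<and> 1 \<le> j \<and> j \<le> m - i + 1}"

definition is_quasi_array :: "nat \<Rightarrow> filling \<Rightarrow> bool" where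
  "is_quasi_array m Q \<longleftrightarrow>
     (\<forall>c. c \<notin> qa_cells m \<longrightarrow> Q c = 0) \<and>
     (\<forall>c\<in>qa_cells m. 1 \<le> Q c) \<and>
     (\<forall>j. 1 \<le> j \<and> j < m \<longrightarrow> Q (1, j) \<le> Q (1, Suc j)) \<and>
     (\<forall>(i, j)\<in>qa_cells m. Q (i, j) = Q (1, i + j - 1) + i - 1)"

definition pi_qr :: "nat list \<Rightarrow> filling \<Rightarrow> filling" where
  "pi_qr \<tau> Q = (\<lambda>c. if c \<in> ribbon_cells \<tau> then Q c else 0)"

definition qarray_bar :: "nat list \<Rightarrow> filling \<Rightarrow> filling" where
  "qarray_bar \<sigma> T = (THE Q. is_quasi_array (sum_list \<sigma>) Q \<and> pi_qr \<sigma> Q = T)"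

definition digraph_iso ::
  "'a set \<Rightarrow> ('a \<times> 'a) set \<Rightarrow> 'b set \<Rightarrow> ('b \<times> 'b) set \<Rightarrow> ('a \<Rightarrow> 'b) \<Rightarrow> bool" where
  "digraph_iso V E V' E' \<phi> \<longleftrightarrow> bij_betw \<phi> V V' \<and>
     (\<forall>x\<in>V. \<forall>y\<in>V. (x, y) \<in> E \<longleftrightarrow> (\<phi> x, \<phi> y) \<in> E')"

end

theory Submission
  imports Defs
begin

text \<open>
  A quasi-ribbon tableau with \<open>m\<close> cells is determined by the first row
  \<open>a\<^sub>1 \<le> \<dots> \<le> a\<^sub>m\<close> of its quasi-array: its cell in row \<open>i\<close> on the antidiagonal
  \<open>i + j - 1 = k\<close> holds \<open>a\<^sub>k + i - 1\<close>. A ribbon meets each antidiagonal \<open>1, \<dots>, m\<close> exactly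
  once, moving right or down from one to the next, so every weakly increasing positive row
  gives a tableau of shape \<open>\<sigma>\<close>, with entries at most \<open>n\<close> iff \<open>a\<^sub>m + r - 1 \<le> n\<close> for \<open>r\<close> the
  number of rows. Hence the vertices of both graphs are parametrized by the same rows, and the
  map of the theorem is the identity on rows.

  The edges agree as well. A quasi-Kashiwara operator raises a single entry by one, hence a
  single \<open>a\<^sub>k\<close>. Conversely, if raising \<open>a\<^sub>k\<close> keeps the row weakly increasing, then
  \<open>a\<^sub>k < a\<^bsub>k+1\<^esub>\<close>. Consequently the entry \<open>i\<close> of the cell \<open>c\<close> on antidiagonal \<open>k\<close> appears
  elsewhere only in the row of \<open>c\<close>, to its left, and every entry \<open>i + 1\<close> lies on a later
  antidiagonal; an \<open>i + 1\<close> read before an \<open>i\<close> would sit below it in the same column, forcing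
  an entry at least \<open>i + 2\<close>. So \<open>c\<close> carries the rightmost \<open>i\<close> of the column reading, no
  \<open>i + 1\<close> is read before an \<open>i\<close>, and \<open>f\<^sub>i\<close> raises exactly \<open>a\<^sub>k\<close>.
\<close>

lemma digraph_iso_common_parametrization:
  assumes f: "bij_betw f A V" and g: "bij_betw g A W"
    and edges: "\<And>a b. a \<in> A \<Longrightarrow> b \<in> A \<Longrightarrow> (f a, f b) \<in> E \<longleftrightarrow> (g a, g b) \<in> E'"
    and \<phi>: "\<And>a. a \<in> A \<Longrightarrow> \<phi> (f a) = g a"
  shows "digraph_iso V E W E' \<phi>"
proof -
  have V: "V = f ` A" using f by (simp add: bij_betw_def)
  have "bij_betw (g \<circ> the_inv_into A f) V W"
    using bij_betw_trans[OF bij_betw_the_inv_into[OF f] g] .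
  moreover have "\<phi> x = (g \<circ> the_inv_into A f) x" if "x \<in> V" for x
    using that \<phi> the_inv_into_f_f[OF bij_betw_imp_inj_on[OF f]] V by auto
  ultimately have "bij_betw \<phi> V W" using bij_betw_cong by blast
  moreover have "(x, y) \<in> E \<longleftrightarrow> (\<phi> x, \<phi> y) \<in> E'" if "x \<in> V" "y \<in> V" for x y
    using that edges \<phi> V by auto
  ultimately show ?thesis by (simp add: digraph_iso_def)
qed

section \<open>Quasi-Kashiwara operators on lists\<close>

lemma sorted_wrt_irrefl_distinct:
  assumes "sorted_wrt R xs" and "\<And>x. \<not> R x x"
  shows "distinct xs"
  using assms by (induction xs) auto

lemma map_fun_upd_nth:
  assumes "distinct xs" and "p < length xs"
  shows "map (f(xs ! p := y)) xs = (map f xs)[p := y]"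
  using assms by (auto intro!: nth_equalityI simp: nth_list_update nth_eq_iff_index_eq)

lemma quasi_f_map_SomeE:
  assumes "distinct xs" and "quasi_f i (map f xs) = Some w"
  obtains x where "x \<in> set xs" "f x = i" "w = map (f(x := Suc i)) xs"
proof -
  define p where "p = (GREATEST p. p < length (map f xs) \<and> map f xs ! p = i)"
  have "i \<in> set (map f xs)" and w: "w = (map f xs)[p := Suc i]"
    using assms(2) unfolding quasi_f_def p_def by (metis option.distinct(1) option.inject)+
  then have "\<exists>q. q < length (map f xs) \<and> map f xs ! q = i"
    by (metis in_set_conv_nth)
  then have "p < length (map f xs) \<and> map f xs ! p = i"
    unfolding p_def by (rule GreatestI_ex_nat[where b = "length (map f xs)"]) simp
  then show thesis
    using that[of "xs ! p"] w map_fun_upd_nth[OF assms(1), of p f "Suc i"] by auto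
qed

lemma quasi_f_map_eq_Some:
  assumes sorted: "sorted_wrt R xs" and irrefl: "\<And>x. \<not> R x x"
    and x: "x \<in> set xs" "f x = i"
    and last: "\<And>y. y \<in> set xs \<Longrightarrow> R x y \<Longrightarrow> f y \<noteq> i"
    and no_pattern: "\<And>y z. y \<in> set xs \<Longrightarrow> z \<in> set xs \<Longrightarrow> R y z \<Longrightarrow> f y = Suc i \<Longrightarrow> f z \<noteq> i"
  shows "quasi_f i (map f xs) = Some (map (f(x := Suc i)) xs)"
proof -
  obtain p where p: "p < length xs" "xs ! p = x"
    using x(1) by (auto simp: in_set_conv_nth)
  have ordered: "R (xs ! q) (xs ! q')" if "q < q'" "q' < length xs" for q q'
    using sorted that by (rule sorted_wrt_nth_less)
  have "(GREATEST q. q < length (map f xs) \<and> map f xs ! q = i) = p"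
  proof (rule Greatest_equality)
    fix q assume q: "q < length (map f xs) \<and> map f xs ! q = i"
    show "q \<le> p"
    proof (rule ccontr)
      assume "\<not> q \<le> p"
      then have "R x (xs ! q)" using ordered[of p q] p q by simp
      then show False using last[of "xs ! q"] q by auto
    qed
  qed (use p x in simp)
  moreover have "\<not> (\<exists>q q'. q < q' \<and> q' < length (map f xs) \<and> map f xs ! q = Suc i \<and> map f xs ! q' = i)"
  proof
    assume "\<exists>q q'. q < q' \<and> q' < length (map f xs) \<and> map f xs ! q = Suc i \<and> map f xs ! q' = i"
    then obtain q q' where "q < q'" "q' < length xs" "f (xs ! q) = Suc i" "f (xs ! q') = i"
      by auto
    then show False using no_pattern[of "xs ! q" "xs ! q'"] ordered[of q q'] by simp
  qed
  ultimately show ?thesis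
    using x p map_fun_upd_nth[OF sorted_wrt_irrefl_distinct[OF sorted irrefl] p(1), of f "Suc i"]
    by (auto simp: quasi_f_def)
qed

section \<open>Geometry of quasi-ribbon diagrams\<close>

definition col_reading_cells :: "nat list \<Rightarrow> (nat \<times> nat) list" where
  "col_reading_cells \<sigma> = concat (map (\<lambda>j. map (\<lambda>i. (i, j))
        (filter (\<lambda>i. (i, j) \<in> ribbon_cells \<sigma>) (rev [1..<Suc (length \<sigma>)])))
      [1..<Suc (sum_list \<sigma>)])"

definition reads_before :: "nat \<times> nat \<Rightarrow> nat \<times> nat \<Rightarrow> bool" where
  "reads_before c c' \<longleftrightarrow> snd c < snd c' \<or> (snd c = snd c' \<and> fst c' < fst c)"

lemma col_reading_eq_map: "col_reading \<sigma> T = map T (col_reading_cells \<sigma>)"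
  unfolding col_reading_def col_reading_cells_def by (simp add: map_concat comp_def)

lemma sorted_wrt_concat_map:
  assumes "sorted_wrt (<) (js :: nat list)" and "\<And>j. j \<in> set js \<Longrightarrow> sorted_wrt R (f j)"
    and "\<And>j j' x y. j < j' \<Longrightarrow> x \<in> set (f j) \<Longrightarrow> y \<in> set (f j') \<Longrightarrow> R x y"
  shows "sorted_wrt R (concat (map f js))"
  using assms by (induction js) (auto simp: sorted_wrt_append)

lemma sorted_wrt_col_reading_cells: "sorted_wrt reads_before (col_reading_cells \<sigma>)"
  unfolding col_reading_cells_def
proof (rule sorted_wrt_concat_map)
  show "sorted_wrt (<) [1..<Suc (sum_list \<sigma>)]" by (rule sorted_wrt_upt)
next
  fix j
  have "sorted_wrt (\<lambda>i i'. reads_before (i', j) (i, j)) [1..<Suc (length \<sigma>)]"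
    by (rule sorted_wrt_mono_rel[OF _ sorted_wrt_upt]) (simp add: reads_before_def)
  then show "sorted_wrt reads_before (map (\<lambda>i. (i, j))
      (filter (\<lambda>i. (i, j) \<in> ribbon_cells \<sigma>) (rev [1..<Suc (length \<sigma>)])))"
    by (simp add: sorted_wrt_map sorted_wrt_filter sorted_wrt_rev)
qed (auto simp: reads_before_def)

lemma reads_before_irrefl: "\<not> reads_before c c"
  by (simp add: reads_before_def)

lemma distinct_col_reading_cells: "distinct (col_reading_cells \<sigma>)"
  using sorted_wrt_col_reading_cells reads_before_irrefl by (rule sorted_wrt_irrefl_distinct)

definition prefix_sum :: "nat list \<Rightarrow> nat \<Rightarrow> nat" where
  "prefix_sum \<sigma> t = (\<Sum>k<t. \<sigma> ! k)"

definition antidiag :: "nat \<times> nat \<Rightarrow> nat" where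
  "antidiag c = fst c + snd c - 1"

lemma antidiag_Pair [simp]: "antidiag (i, j) = i + j - 1"
  by (simp add: antidiag_def)

locale ribbon_shape =
  fixes \<sigma> :: "nat list"
  assumes parts_pos: "\<forall>x\<in>set \<sigma>. 0 < x" and nonempty: "\<sigma> \<noteq> []"
begin

lemma part_pos: "k < length \<sigma> \<Longrightarrow> 0 < \<sigma> ! k"
  using parts_pos by simp

lemma prefix_sum_Suc: "prefix_sum \<sigma> (Suc t) = prefix_sum \<sigma> t + \<sigma> ! t"
  by (simp add: prefix_sum_def)

lemma prefix_sum_length: "prefix_sum \<sigma> (length \<sigma>) = sum_list \<sigma>"
  by (simp add: prefix_sum_def sum_list_sum_nth atLeast0LessThan)

lemma prefix_sum_gap:
  assumes "i \<le> i'" and "i' \<le> length \<sigma>"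
  shows "prefix_sum \<sigma> i + (i' - i) \<le> prefix_sum \<sigma> i'"
proof -
  have "prefix_sum \<sigma> i' = prefix_sum \<sigma> i + (\<Sum>k = i..<i'. \<sigma> ! k)"
    using assms by (simp add: prefix_sum_def lessThan_atLeast0 sum.atLeastLessThan_concat)
  moreover have "(\<Sum>k = i..<i'. 1) \<le> (\<Sum>k = i..<i'. \<sigma> ! k)"
    using assms part_pos by (intro sum_mono) (simp add: Suc_leI)
  ultimately show ?thesis by simp
qed

lemma prefix_sum_mono: "i \<le> i' \<Longrightarrow> i' \<le> length \<sigma> \<Longrightarrow> prefix_sum \<sigma> i \<le> prefix_sum \<sigma> i'"
  using prefix_sum_gap by fastforce

lemma prefix_sum_strict_mono: "i < i' \<Longrightarrow> i' \<le> length \<sigma> \<Longrightarrow> prefix_sum \<sigma> i < prefix_sum \<sigma> i'"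
  using prefix_sum_gap[of i i'] by simp

lemma ribbon_start_eq:
  assumes "1 \<le> i" and "i \<le> length \<sigma>"
  shows "ribbon_start \<sigma> i + (i - 1) = 1 + prefix_sum \<sigma> (i - 1)"
proof -
  have "(\<Sum>k<i - 1. \<sigma> ! k - 1) + (i - 1) = (\<Sum>k<i - 1. \<sigma> ! k - 1 + 1)"
    unfolding sum.distrib by simp
  also have "\<dots> = prefix_sum \<sigma> (i - 1)"
    unfolding prefix_sum_def using assms part_pos by (intro sum.cong) auto
  finally show ?thesis by (simp add: ribbon_start_def)
qed

lemma mem_ribbon_cells_iff:
  "(i, j) \<in> ribbon_cells \<sigma> \<longleftrightarrow>
     1 \<le> i \<and> i \<le> length \<sigma> \<and> prefix_sum \<sigma> (i - 1) < i + j - 1 \<and> i + j - 1 \<le> prefix_sum \<sigma> i"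
proof -
  have "prefix_sum \<sigma> i = prefix_sum \<sigma> (i - 1) + \<sigma> ! (i - 1)" if "1 \<le> i" for i
    using prefix_sum_Suc[of "i - 1"] that by simp
  then show ?thesis
    unfolding ribbon_cells_def using ribbon_start_eq by (auto; fastforce)
qed

lemma ribbon_cells_bounds:
  assumes "c \<in> ribbon_cells \<sigma>"
  shows "1 \<le> fst c" "fst c \<le> length \<sigma>" "1 \<le> snd c" "antidiag c \<in> {1..sum_list \<sigma>}"
proof -
  obtain i j where c: "c = (i, j)" by fastforce
  then have ij: "1 \<le> i" "i \<le> length \<sigma>" "prefix_sum \<sigma> (i - 1) < i + j - 1" "i + j - 1 \<le> prefix_sum \<sigma> i"
    using assms mem_ribbon_cells_iff by auto
  have "i - 1 \<le> prefix_sum \<sigma> (i - 1)"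
    using prefix_sum_gap[of 0 "i - 1"] ij by (simp add: prefix_sum_def)
  moreover have "prefix_sum \<sigma> i \<le> sum_list \<sigma>"
    using prefix_sum_mono[of i "length \<sigma>"] ij prefix_sum_length by simp
  ultimately show "1 \<le> fst c" "fst c \<le> length \<sigma>" "1 \<le> snd c" "antidiag c \<in> {1..sum_list \<sigma>}"
    using ij c by auto
qed

lemma ribbon_cells_subset_qa_cells: "ribbon_cells \<sigma> \<subseteq> qa_cells (sum_list \<sigma>)"
  using ribbon_cells_bounds by (force simp: qa_cells_def)

lemma set_col_reading_cells: "set (col_reading_cells \<sigma>) = ribbon_cells \<sigma>"
proof
  show "ribbon_cells \<sigma> \<subseteq> set (col_reading_cells \<sigma>)"
  proof
    fix c assume c: "c \<in> ribbon_cells \<sigma>"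
    then have "snd c \<in> {1..sum_list \<sigma>}"
      using ribbon_cells_bounds[OF c] by (cases c) auto
    then show "c \<in> set (col_reading_cells \<sigma>)"
      using c ribbon_cells_bounds[OF c] unfolding col_reading_cells_def
      by (cases c) (force simp del: upt_Suc)
  qed
qed (auto simp: col_reading_cells_def)

lemma ribbon_cells_antidiag_le:
  assumes c: "c \<in> ribbon_cells \<sigma>" and c': "c' \<in> ribbon_cells \<sigma>" and le: "antidiag c \<le> antidiag c'"
  shows "fst c \<le> fst c'" "snd c \<le> snd c'"
proof -
  obtain i j i' j' where ij: "c = (i, j)" "c' = (i', j')" by fastforce
  have h: "1 \<le> i" "prefix_sum \<sigma> (i - 1) < i + j - 1" "i + j - 1 \<le> prefix_sum \<sigma> i"
    "1 \<le> i'" "i' \<le> length \<sigma>" "prefix_sum \<sigma> (i' - 1) < i' + j' - 1" "i' + j' - 1 \<le> prefix_sum \<sigma> i'"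
    using c c' ij mem_ribbon_cells_iff by auto
  have "i \<le> i'"
  proof (rule ccontr)
    assume "\<not> i \<le> i'"
    then have "prefix_sum \<sigma> i' \<le> prefix_sum \<sigma> (i - 1)"
      using prefix_sum_mono[of i' "i - 1"] ribbon_cells_bounds(2)[OF c] ij by simp
    then show False using h le ij by simp
  qed
  moreover have "j \<le> j'"
  proof (cases "i = i'")
    case False
    then have "prefix_sum \<sigma> i + (i' - 1 - i) \<le> prefix_sum \<sigma> (i' - 1)"
      using \<open>i \<le> i'\<close> h by (intro prefix_sum_gap) auto
    then show ?thesis using h \<open>i \<le> i'\<close> False by simp
  qed (use le ij h in simp)
  ultimately show "fst c \<le> fst c'" "snd c \<le> snd c'" using ij by simp_all
qed

lemma inj_on_antidiag: "inj_on antidiag (ribbon_cells \<sigma>)"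
proof (rule inj_onI)
  fix c c' assume "c \<in> ribbon_cells \<sigma>" "c' \<in> ribbon_cells \<sigma>" "antidiag c = antidiag c'"
  then show "c = c'"
    using ribbon_cells_antidiag_le[of c c'] ribbon_cells_antidiag_le[of c' c] by (simp add: prod_eq_iff)
qed

lemma antidiag_image: "antidiag ` ribbon_cells \<sigma> = {1..sum_list \<sigma>}"
proof
  show "{1..sum_list \<sigma>} \<subseteq> antidiag ` ribbon_cells \<sigma>"
  proof
    fix k assume k: "k \<in> {1..sum_list \<sigma>}"
    define i where "i = (LEAST i. k \<le> prefix_sum \<sigma> i)"
    have ex: "k \<le> prefix_sum \<sigma> (length \<sigma>)" using k prefix_sum_length by simp
    then have i1: "k \<le> prefix_sum \<sigma> i" unfolding i_def by (rule LeastI)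
    have i2: "i \<le> length \<sigma>" unfolding i_def using ex by (rule Least_le)
    have "i \<noteq> 0" using i1 k by (cases i) (auto simp: prefix_sum_def)
    then have i3: "prefix_sum \<sigma> (i - 1) < k"
      using not_less_Least[of "i - 1" "\<lambda>i. k \<le> prefix_sum \<sigma> i"] i_def by simp
    have "i - 1 \<le> prefix_sum \<sigma> (i - 1)"
      using prefix_sum_gap[of 0 "i - 1"] i2 by (simp add: prefix_sum_def)
    then have "(i, k + 1 - i) \<in> ribbon_cells \<sigma>"
      unfolding mem_ribbon_cells_iff using i1 i2 i3 \<open>i \<noteq> 0\<close> by simp
    moreover have "antidiag (i, k + 1 - i) = k" using i3 \<open>i - 1 \<le> prefix_sum \<sigma> (i - 1)\<close> by simp
    ultimately show "k \<in> antidiag ` ribbon_cells \<sigma>" by force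
  qed
qed (use ribbon_cells_bounds in blast)

lemma bij_betw_antidiag: "bij_betw antidiag (ribbon_cells \<sigma>) {1..sum_list \<sigma>}"
  using inj_on_antidiag antidiag_image by (simp add: bij_betw_def)

lemma sum_list_pos: "0 < sum_list \<sigma>"
proof -
  have "hd \<sigma> \<in> set \<sigma>" using nonempty by simp
  then show ?thesis using parts_pos member_le_sum_list[of "hd \<sigma>" \<sigma>] by fastforce
qed

definition antidiag_cell :: "nat \<Rightarrow> nat \<times> nat" where
  "antidiag_cell = the_inv_into (ribbon_cells \<sigma>) antidiag"

lemma antidiag_cell:
  assumes "k \<in> {1..sum_list \<sigma>}"
  shows "antidiag_cell k \<in> ribbon_cells \<sigma>" "antidiag (antidiag_cell k) = k"
  using assms bij_betw_the_inv_into[OF bij_betw_antidiag] f_the_inv_into_f_bij_betw[OF bij_betw_antidiag]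
  unfolding antidiag_cell_def by (auto simp: bij_betw_def)

lemma antidiag_cell_antidiag: "c \<in> ribbon_cells \<sigma> \<Longrightarrow> antidiag_cell (antidiag c) = c"
  unfolding antidiag_cell_def by (rule the_inv_into_f_f[OF inj_on_antidiag])

lemma antidiag_cell_1: "antidiag_cell 1 = (1, 1)"
proof -
  have "0 < length \<sigma>" using nonempty by simp
  then have "(1, 1) \<in> ribbon_cells \<sigma>"
    using part_pos[of 0] unfolding mem_ribbon_cells_iff by (simp add: prefix_sum_def Suc_le_eq)
  then show ?thesis using antidiag_cell_antidiag by fastforce
qed

lemma fst_antidiag_cell_sum_list: "fst (antidiag_cell (sum_list \<sigma>)) = length \<sigma>"
proof -
  have m: "sum_list \<sigma> \<in> {1..sum_list \<sigma>}"
    using sum_list_pos by simp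
  obtain i j where ij: "antidiag_cell (sum_list \<sigma>) = (i, j)" by fastforce
  then have "1 \<le> i" "i \<le> length \<sigma>" "i + j - 1 = sum_list \<sigma>" "i + j - 1 \<le> prefix_sum \<sigma> i"
    using antidiag_cell[OF m] mem_ribbon_cells_iff by auto
  then show ?thesis
    using prefix_sum_strict_mono[of i "length \<sigma>"] prefix_sum_length ij by fastforce
qed

lemma antidiag_cell_Suc_cases:
  assumes k: "1 \<le> k" "k < sum_list \<sigma>" and ij: "antidiag_cell k = (i, j)"
  obtains "antidiag_cell (Suc k) = (i, Suc j)" | "antidiag_cell (Suc k) = (Suc i, j)"
proof -
  have c: "(i, j) \<in> ribbon_cells \<sigma>" "i + j - 1 = k" and "1 \<le> i" "1 \<le> j"
    using antidiag_cell[of k] ribbon_cells_bounds[of "(i, j)"] k ij by auto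
  then have h: "1 \<le> i" "i \<le> length \<sigma>" "prefix_sum \<sigma> (i - 1) < k" "k \<le> prefix_sum \<sigma> i"
    using mem_ribbon_cells_iff by auto
  have "(i, Suc j) \<in> ribbon_cells \<sigma> \<or> (Suc i, j) \<in> ribbon_cells \<sigma>"
  proof (cases "k < prefix_sum \<sigma> i")
    case True
    then show ?thesis using h c \<open>1 \<le> j\<close> unfolding mem_ribbon_cells_iff by auto
  next
    case False
    then have "i < length \<sigma>"
      using h k prefix_sum_length by (metis le_neq_implies_less order.strict_iff_not)
    then show ?thesis
      using h c False part_pos[of i] unfolding mem_ribbon_cells_iff by (auto simp: prefix_sum_Suc)
  qed
  moreover have "Suc k = antidiag (i, Suc j)" "Suc k = antidiag (Suc i, j)"
    using c \<open>1 \<le> i\<close> \<open>1 \<le> j\<close> by auto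
  ultimately show thesis
    using that antidiag_cell_antidiag by metis
qed

end

section \<open>Tableaux as first rows of quasi-arrays\<close>

text \<open>The first row \<open>a\<close> of a quasi-array of size \<open>m\<close> whose projections onto shapes with
  \<open>r\<close> rows have entries at most \<open>n\<close>; it is set to \<open>0\<close> outside \<open>{1..m}\<close> so that it is unique.\<close>
definition admissible_row :: "nat \<Rightarrow> nat \<Rightarrow> nat \<Rightarrow> (nat \<Rightarrow> nat) \<Rightarrow> bool" where
  "admissible_row m r n a \<longleftrightarrow> (\<forall>k. k \<notin> {1..m} \<longrightarrow> a k = 0) \<and> (\<forall>k\<in>{1..m}. 1 \<le> a k) \<and>
     mono_on {1..m} a \<and> a m + r - 1 \<le> n"

definition qarray_of_row :: "nat \<Rightarrow> (nat \<Rightarrow> nat) \<Rightarrow> filling" where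
  "qarray_of_row m a = (\<lambda>c. if c \<in> qa_cells m then a (antidiag c) + fst c - 1 else 0)"

definition ribbon_of_row :: "nat list \<Rightarrow> (nat \<Rightarrow> nat) \<Rightarrow> filling" where
  "ribbon_of_row \<sigma> a = (\<lambda>c. if c \<in> ribbon_cells \<sigma> then a (antidiag c) + fst c - 1 else 0)"

lemma
  assumes "admissible_row m r n a"
  shows admissible_row_outside: "k \<notin> {1..m} \<Longrightarrow> a k = 0"
    and admissible_row_pos: "k \<in> {1..m} \<Longrightarrow> 1 \<le> a k"
    and admissible_row_mono_on: "mono_on {1..m} a"
    and admissible_row_mono: "k \<in> {1..m} \<Longrightarrow> k' \<in> {1..m} \<Longrightarrow> k \<le> k' \<Longrightarrow> a k \<le> a k'"
    and admissible_row_bound: "a m + r - 1 \<le> n"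
  using assms by (auto simp: admissible_row_def mono_on_def)

lemma quasi_array_entry:
  "is_quasi_array m Q \<Longrightarrow> c \<in> qa_cells m \<Longrightarrow> Q c = Q (1, antidiag c) + fst c - 1"
  unfolding is_quasi_array_def antidiag_def by (cases c) fastforce

lemma quasi_array_outside: "is_quasi_array m Q \<Longrightarrow> c \<notin> qa_cells m \<Longrightarrow> Q c = 0"
  unfolding is_quasi_array_def by blast

lemma antidiag_qa_cells: "c \<in> qa_cells m \<Longrightarrow> antidiag c \<in> {1..m}"
  by (cases c) (auto simp: qa_cells_def)

lemma
  assumes "is_qrt n \<sigma> T"
  shows qrt_outside: "c \<notin> ribbon_cells \<sigma> \<Longrightarrow> T c = 0"
    and qrt_bounds: "c \<in> ribbon_cells \<sigma> \<Longrightarrow> 1 \<le> T c \<and> T c \<le> n"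
  using assms unfolding is_qrt_def by blast+

lemma is_quasi_array_qarray_of_row:
  assumes a: "admissible_row m r n a"
  shows "is_quasi_array m (qarray_of_row m a)"
  unfolding is_quasi_array_def
proof (intro conjI allI impI ballI)
  fix c assume "c \<in> qa_cells m"
  then show "1 \<le> qarray_of_row m a c"
    using admissible_row_pos[OF a, of "antidiag c"] antidiag_qa_cells[of c m]
    by (cases c) (auto simp: qarray_of_row_def qa_cells_def)
next
  fix j assume "1 \<le> j \<and> j < m"
  then show "qarray_of_row m a (1, j) \<le> qarray_of_row m a (1, Suc j)"
    using admissible_row_mono[OF a, of j "Suc j"] by (simp add: qarray_of_row_def qa_cells_def)
next
  fix c assume "c \<in> qa_cells m"
  then show "case c of (i, j) \<Rightarrow> qarray_of_row m a (i, j) = qarray_of_row m a (1, i + j - 1) + i - 1"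
    by (auto simp: qarray_of_row_def qa_cells_def)
qed (simp add: qarray_of_row_def)

context ribbon_shape
begin

lemma pi_qr_qarray_of_row: "pi_qr \<sigma> (qarray_of_row (sum_list \<sigma>) a) = ribbon_of_row \<sigma> a"
  using ribbon_cells_subset_qa_cells by (auto simp: fun_eq_iff pi_qr_def qarray_of_row_def ribbon_of_row_def)

lemma qarray_bar_ribbon_of_row:
  assumes a: "admissible_row (sum_list \<sigma>) r n a"
  shows "qarray_bar \<sigma> (ribbon_of_row \<sigma> a) = qarray_of_row (sum_list \<sigma>) a"
  unfolding qarray_bar_def
proof (rule the_equality)
  fix Q
  assume Q: "is_quasi_array (sum_list \<sigma>) Q \<and> pi_qr \<sigma> Q = ribbon_of_row \<sigma> a"
  have first_row: "Q (1, k) = a k" if k: "k \<in> {1..sum_list \<sigma>}" for k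
  proof -
    let ?c = "antidiag_cell k"
    have c: "?c \<in> ribbon_cells \<sigma>" "antidiag ?c = k" "1 \<le> fst ?c"
      using antidiag_cell[OF k] ribbon_cells_bounds(1) by auto
    then have "Q ?c = Q (1, k) + fst ?c - 1"
      using quasi_array_entry[of _ Q ?c] Q ribbon_cells_subset_qa_cells by auto
    moreover have "Q ?c = a k + fst ?c - 1"
      using fun_cong[OF conjunct2[OF Q], of ?c] c by (simp add: pi_qr_def ribbon_of_row_def)
    ultimately show ?thesis using c by simp
  qed
  show "Q = qarray_of_row (sum_list \<sigma>) a"
  proof
    fix c :: "nat \<times> nat"
    show "Q c = qarray_of_row (sum_list \<sigma>) a c"
    proof (cases "c \<in> qa_cells (sum_list \<sigma>)")
      case True
      then show ?thesis
        using quasi_array_entry[of "sum_list \<sigma>" Q c] Q first_row antidiag_qa_cells[of c]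
        by (simp add: qarray_of_row_def)
    next
      case False
      then show ?thesis
        using quasi_array_outside[of "sum_list \<sigma>" Q c] Q by (simp add: qarray_of_row_def)
    qed
  qed
qed (simp add: is_quasi_array_qarray_of_row[OF a] pi_qr_qarray_of_row)

lemma is_qrt_ribbon_of_row:
  assumes a: "admissible_row (sum_list \<sigma>) (length \<sigma>) n a"
  shows "is_qrt n \<sigma> (ribbon_of_row \<sigma> a)"
  unfolding is_qrt_def
proof (intro conjI allI impI ballI)
  fix c assume c: "c \<in> ribbon_cells \<sigma>"
  have "a (antidiag c) \<le> a (sum_list \<sigma>)"
    using admissible_row_mono[OF a] ribbon_cells_bounds(4)[OF c] by simp
  then show "ribbon_of_row \<sigma> a c \<le> n"
    using admissible_row_bound[OF a] ribbon_cells_bounds(2)[OF c] c by (simp add: ribbon_of_row_def)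
  show "1 \<le> ribbon_of_row \<sigma> a c"
    using admissible_row_pos[OF a, of "antidiag c"] ribbon_cells_bounds[OF c] c
    by (simp add: ribbon_of_row_def)
next
  fix i j assume c: "(i, j) \<in> ribbon_cells \<sigma> \<and> (i, Suc j) \<in> ribbon_cells \<sigma>"
  then have "a (antidiag (i, j)) \<le> a (antidiag (i, Suc j))"
    using admissible_row_mono[OF a, of "antidiag (i, j)" "antidiag (i, Suc j)"]
      ribbon_cells_bounds(4)[of "(i, j)"] ribbon_cells_bounds(4)[of "(i, Suc j)"] by simp
  then show "ribbon_of_row \<sigma> a (i, j) \<le> ribbon_of_row \<sigma> a (i, Suc j)"
    using c by (simp add: ribbon_of_row_def)
next
  fix i j assume c: "(i, j) \<in> ribbon_cells \<sigma> \<and> (Suc i, j) \<in> ribbon_cells \<sigma>"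
  then have "a (antidiag (i, j)) \<le> a (antidiag (Suc i, j))"
    using admissible_row_mono[OF a, of "antidiag (i, j)" "antidiag (Suc i, j)"]
      ribbon_cells_bounds(4)[of "(i, j)"] ribbon_cells_bounds(4)[of "(Suc i, j)"] by simp
  then show "ribbon_of_row \<sigma> a (i, j) < ribbon_of_row \<sigma> a (Suc i, j)"
    using c ribbon_cells_bounds(1)[of "(i, j)"] by (simp add: ribbon_of_row_def)
qed (simp add: ribbon_of_row_def)

lemma inj_on_ribbon_of_row:
  "inj_on (ribbon_of_row \<sigma>) {a. \<forall>k. k \<notin> {1..sum_list \<sigma>} \<longrightarrow> a k = 0}"
proof (rule inj_onI)
  fix a b
  assume a: "a \<in> {a. \<forall>k. k \<notin> {1..sum_list \<sigma>} \<longrightarrow> a k = 0}"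
    and b: "b \<in> {a. \<forall>k. k \<notin> {1..sum_list \<sigma>} \<longrightarrow> a k = 0}"
    and eq: "ribbon_of_row \<sigma> a = ribbon_of_row \<sigma> b"
  have "a k = b k" if k: "k \<in> {1..sum_list \<sigma>}" for k
    using fun_cong[OF eq, of "antidiag_cell k"] antidiag_cell[OF k] ribbon_cells_bounds(1)[OF antidiag_cell(1)[OF k]]
    by (simp add: ribbon_of_row_def)
  moreover have "a k = b k" if "k \<notin> {1..sum_list \<sigma>}" for k
    using a b that by simp
  ultimately show "a = b" by blast
qed

lemma qrt_antidiag_cell_Suc_cases:
  assumes T: "is_qrt n \<sigma> T" and k: "1 \<le> k" "k < sum_list \<sigma>" and ij: "antidiag_cell k = (i, j)"
  obtains "antidiag_cell (Suc k) = (i, Suc j)" "T (i, j) \<le> T (i, Suc j)"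
    | "antidiag_cell (Suc k) = (Suc i, j)" "T (i, j) < T (Suc i, j)"
proof -
  have "(i, j) \<in> ribbon_cells \<sigma>" "antidiag_cell (Suc k) \<in> ribbon_cells \<sigma>"
    using antidiag_cell(1)[of k] antidiag_cell(1)[of "Suc k"] k ij by auto
  with k ij that show thesis
    by (cases rule: antidiag_cell_Suc_cases) (use T in \<open>auto simp: is_qrt_def\<close>)
qed

lemma qrt_fst_le:
  assumes T: "is_qrt n \<sigma> T" and c: "c \<in> ribbon_cells \<sigma>"
  shows "fst c \<le> T c"
proof -
  have "fst (antidiag_cell k) \<le> T (antidiag_cell k)" if "1 \<le> k" "k \<le> sum_list \<sigma>" for k
    using that
  proof (induction k rule: nat_induct_at_least)
    case base
    have "(1, 1) \<in> ribbon_cells \<sigma>" using antidiag_cell(1)[of 1] antidiag_cell_1 base by simp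
    then show ?case using T antidiag_cell_1 unfolding is_qrt_def by auto
  next
    case (Suc k)
    obtain i j where ij: "antidiag_cell k = (i, j)" by fastforce
    have k: "k < sum_list \<sigma>" using Suc.prems by simp
    then have "i \<le> T (i, j)" using Suc.IH ij by simp
    from T Suc.hyps k ij show ?case
      by (cases rule: qrt_antidiag_cell_Suc_cases) (use \<open>i \<le> T (i, j)\<close> in auto)
  qed
  then show ?thesis
    using c antidiag_cell_antidiag ribbon_cells_bounds(4)[OF c] by fastforce
qed

definition first_row :: "filling \<Rightarrow> nat \<Rightarrow> nat" where
  "first_row T k = (if k \<in> {1..sum_list \<sigma>} then T (antidiag_cell k) + 1 - fst (antidiag_cell k) else 0)"

lemma first_row_Suc_mono:
  assumes T: "is_qrt n \<sigma> T" and k: "k \<in> {1..<sum_list \<sigma>}"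
  shows "first_row T k \<le> first_row T (Suc k)"
proof -
  obtain i j where ij: "antidiag_cell k = (i, j)" by fastforce
  from T _ _ ij show ?thesis
    by (cases rule: qrt_antidiag_cell_Suc_cases) (use k ij in \<open>auto simp: first_row_def\<close>)
qed

lemma admissible_first_row:
  assumes T: "is_qrt n \<sigma> T"
  shows "admissible_row (sum_list \<sigma>) (length \<sigma>) n (first_row T)"
  unfolding admissible_row_def
proof (intro conjI allI impI ballI)
  fix k assume k: "k \<in> {1..sum_list \<sigma>}"
  then show "1 \<le> first_row T k"
    using qrt_fst_le[OF T antidiag_cell(1)[OF k]] by (simp add: first_row_def)
next
  show "mono_on {1..sum_list \<sigma>} (first_row T)"
  proof (rule mono_onI)
    fix k k' assume k: "k \<in> {1..sum_list \<sigma>}" "k' \<in> {1..sum_list \<sigma>}" "k \<le> k'"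
    show "first_row T k \<le> first_row T k'"
    proof (rule lift_Suc_mono_le_ivl[of "{1..<sum_list \<sigma>}" "first_row T"])
      show "first_row T i \<le> first_row T (Suc i)" if "i \<in> {1..<sum_list \<sigma>}" for i
        using T that by (rule first_row_Suc_mono)
    qed (use k in auto)
  qed
next
  let ?c = "antidiag_cell (sum_list \<sigma>)"
  have m: "sum_list \<sigma> \<in> {1..sum_list \<sigma>}" using sum_list_pos by simp
  have "fst ?c \<le> T ?c" "T ?c \<le> n"
    using qrt_fst_le[OF T] T antidiag_cell(1)[OF m] unfolding is_qrt_def by auto
  then show "first_row T (sum_list \<sigma>) + length \<sigma> - 1 \<le> n"
    using fst_antidiag_cell_sum_list m by (simp add: first_row_def)
qed (auto simp: first_row_def)

lemma ribbon_of_first_row: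
  assumes T: "is_qrt n \<sigma> T"
  shows "ribbon_of_row \<sigma> (first_row T) = T"
proof
  fix c
  show "ribbon_of_row \<sigma> (first_row T) c = T c"
  proof (cases "c \<in> ribbon_cells \<sigma>")
    case True
    then show ?thesis
      using qrt_fst_le[OF T True] ribbon_cells_bounds[OF True] antidiag_cell_antidiag[OF True]
      by (simp add: ribbon_of_row_def first_row_def)
  next
    case False
    then show ?thesis using qrt_outside[OF T] by (simp add: ribbon_of_row_def)
  qed
qed

lemma bij_betw_ribbon_of_row:
  "bij_betw (ribbon_of_row \<sigma>) {a. admissible_row (sum_list \<sigma>) (length \<sigma>) n a} (hypo_vertices n \<sigma>)"
  unfolding bij_betw_def
proof
  show "inj_on (ribbon_of_row \<sigma>) {a. admissible_row (sum_list \<sigma>) (length \<sigma>) n a}"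
    by (rule inj_on_subset[OF inj_on_ribbon_of_row]) (auto dest: admissible_row_outside)
  show "ribbon_of_row \<sigma> ` {a. admissible_row (sum_list \<sigma>) (length \<sigma>) n a} = hypo_vertices n \<sigma>"
  proof
    show "ribbon_of_row \<sigma> ` {a. admissible_row (sum_list \<sigma>) (length \<sigma>) n a} \<subseteq> hypo_vertices n \<sigma>"
      using is_qrt_ribbon_of_row by (auto simp: hypo_vertices_def)
  next
    show "hypo_vertices n \<sigma> \<subseteq> ribbon_of_row \<sigma> ` {a. admissible_row (sum_list \<sigma>) (length \<sigma>) n a}"
    proof
      fix T assume "T \<in> hypo_vertices n \<sigma>"
      then have T: "is_qrt n \<sigma> T" by (simp add: hypo_vertices_def)
      then have "T = ribbon_of_row \<sigma> (first_row T)" by (simp add: ribbon_of_first_row)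
      then show "T \<in> ribbon_of_row \<sigma> ` {a. admissible_row (sum_list \<sigma>) (length \<sigma>) n a}"
        using admissible_first_row[OF T] by blast
    qed
  qed
qed

end

section \<open>Edges as unit increments of first rows\<close>

context ribbon_shape
begin

lemma ribbon_of_row_fun_upd:
  assumes c0: "c0 \<in> ribbon_cells \<sigma>"
  shows "ribbon_of_row \<sigma> (a(antidiag c0 := Suc (a (antidiag c0))))
    = (ribbon_of_row \<sigma> a)(c0 := Suc (ribbon_of_row \<sigma> a c0))"
proof
  fix c
  show "ribbon_of_row \<sigma> (a(antidiag c0 := Suc (a (antidiag c0)))) c
    = ((ribbon_of_row \<sigma> a)(c0 := Suc (ribbon_of_row \<sigma> a c0))) c"
  proof (cases "c \<in> ribbon_cells \<sigma>")
    case True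
    then have "antidiag c = antidiag c0 \<longleftrightarrow> c = c0"
      using inj_on_antidiag c0 by (auto dest: inj_onD)
    then show ?thesis
      using True c0 ribbon_cells_bounds(1)[OF c0] by (auto simp: ribbon_of_row_def)
  qed (use c0 in \<open>auto simp: ribbon_of_row_def\<close>)
qed

lemma ribbon_of_row_antidiag_le:
  assumes a: "mono_on {1..sum_list \<sigma>} a"
    and c: "c \<in> ribbon_cells \<sigma>" and c0: "c0 \<in> ribbon_cells \<sigma>" and le: "antidiag c \<le> antidiag c0"
  shows "ribbon_of_row \<sigma> a c + fst c0 \<le> ribbon_of_row \<sigma> a c0 + fst c"
proof -
  have "a (antidiag c) \<le> a (antidiag c0)"
    using mono_onD[OF a] ribbon_cells_bounds(4)[OF c] ribbon_cells_bounds(4)[OF c0] le by blast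
  then show ?thesis
    using c c0 ribbon_cells_bounds(1)[OF c] ribbon_cells_bounds(1)[OF c0]
    by (simp add: ribbon_of_row_def)
qed

lemma ribbon_of_row_antidiag_less:
  assumes a: "mono_on {1..sum_list \<sigma>} a"
    and c: "c \<in> ribbon_cells \<sigma>" and c0: "c0 \<in> ribbon_cells \<sigma>" and less: "antidiag c0 < antidiag c"
    and strict: "a (antidiag c0) < a (Suc (antidiag c0))"
  shows "ribbon_of_row \<sigma> a c0 + 1 + fst c \<le> ribbon_of_row \<sigma> a c + fst c0"
proof -
  have "Suc (antidiag c0) \<in> {1..sum_list \<sigma>}"
    using ribbon_cells_bounds(4)[OF c] less by simp
  then have "a (Suc (antidiag c0)) \<le> a (antidiag c)"
    using mono_onD[OF a] ribbon_cells_bounds(4)[OF c] less by simp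
  then show ?thesis
    using c c0 strict ribbon_cells_bounds(1)[OF c] ribbon_cells_bounds(1)[OF c0]
    by (simp add: ribbon_of_row_def)
qed

lemma ribbon_of_row_eq_entry:
  assumes a: "mono_on {1..sum_list \<sigma>} a"
    and c: "c \<in> ribbon_cells \<sigma>" and c0: "c0 \<in> ribbon_cells \<sigma>"
    and strict: "antidiag c0 < sum_list \<sigma> \<Longrightarrow> a (antidiag c0) < a (Suc (antidiag c0))"
    and eq: "ribbon_of_row \<sigma> a c = ribbon_of_row \<sigma> a c0"
  shows "antidiag c \<le> antidiag c0" and "fst c = fst c0"
proof -
  show le: "antidiag c \<le> antidiag c0"
  proof (rule ccontr)
    assume "\<not> antidiag c \<le> antidiag c0"
    then have less: "antidiag c0 < antidiag c" by simp
    moreover have "antidiag c0 < sum_list \<sigma>"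
      using less ribbon_cells_bounds(4)[OF c] by simp
    ultimately have "ribbon_of_row \<sigma> a c0 + 1 + fst c \<le> ribbon_of_row \<sigma> a c + fst c0"
      using ribbon_of_row_antidiag_less[OF a c c0] strict by simp
    then show False
      using ribbon_cells_antidiag_le(1)[OF c0 c] less eq by simp
  qed
  show "fst c = fst c0"
    using ribbon_of_row_antidiag_le[OF a c c0 le] ribbon_cells_antidiag_le(1)[OF c c0 le] eq by simp
qed

lemma ribbon_of_row_Suc_entry:
  assumes a: "mono_on {1..sum_list \<sigma>} a"
    and c: "c \<in> ribbon_cells \<sigma>" and c0: "c0 \<in> ribbon_cells \<sigma>"
    and eq: "ribbon_of_row \<sigma> a c = Suc (ribbon_of_row \<sigma> a c0)"
  shows "antidiag c0 < antidiag c"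
proof (rule ccontr)
  assume "\<not> antidiag c0 < antidiag c"
  then have le: "antidiag c \<le> antidiag c0" by simp
  show False
    using ribbon_of_row_antidiag_le[OF a c c0 le] ribbon_cells_antidiag_le(1)[OF c c0 le] eq by simp
qed

lemma reads_before_antidiag_le:
  assumes "c \<in> ribbon_cells \<sigma>" and "c' \<in> ribbon_cells \<sigma>" and "antidiag c \<le> antidiag c'"
    and "reads_before c' c"
  shows "fst c < fst c'"
  using ribbon_cells_antidiag_le[OF assms(1-3)] assms(4) by (auto simp: reads_before_def)

lemma hypo_edge_imp_increment:
  assumes a: "admissible_row (sum_list \<sigma>) (length \<sigma>) n a"
    and b: "admissible_row (sum_list \<sigma>) (length \<sigma>) n b"
    and edge: "(ribbon_of_row \<sigma> a, ribbon_of_row \<sigma> b) \<in> hypo_edges n \<sigma>"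
  shows "\<exists>k\<in>{1..sum_list \<sigma>}. b = a(k := Suc (a k))"
proof -
  let ?Ta = "ribbon_of_row \<sigma> a" and ?Tb = "ribbon_of_row \<sigma> b" and ?L = "col_reading_cells \<sigma>"
  from edge obtain i where "quasi_f i (map ?Ta ?L) = Some (map ?Tb ?L)"
    by (auto simp: hypo_edges_def col_reading_eq_map)
  then obtain c where c: "c \<in> ribbon_cells \<sigma>" "?Ta c = i" and upd: "map ?Tb ?L = map (?Ta(c := Suc i)) ?L"
    using set_col_reading_cells by (auto elim: quasi_f_map_SomeE[OF distinct_col_reading_cells])
  have "?Tb = ?Ta(c := Suc (?Ta c))"
  proof
    fix c'
    show "?Tb c' = (?Ta(c := Suc (?Ta c))) c'"
      using upd c set_col_reading_cells by (cases "c' \<in> ribbon_cells \<sigma>") (auto simp: ribbon_of_row_def)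
  qed
  also have "\<dots> = ribbon_of_row \<sigma> (a(antidiag c := Suc (a (antidiag c))))"
    by (rule ribbon_of_row_fun_upd[OF c(1), symmetric])
  finally have "b = a(antidiag c := Suc (a (antidiag c)))"
    using admissible_row_outside[OF a] admissible_row_outside[OF b] ribbon_cells_bounds(4)[OF c(1)]
    by (auto intro: inj_onD[OF inj_on_ribbon_of_row])
  then show ?thesis
    using ribbon_cells_bounds(4)[OF c(1)] by blast
qed

lemma quasi_f_col_reading_ribbon_of_row:
  assumes mono: "mono_on {1..sum_list \<sigma>} a" and c0: "c0 \<in> ribbon_cells \<sigma>"
    and strict: "antidiag c0 < sum_list \<sigma> \<Longrightarrow> a (antidiag c0) < a (Suc (antidiag c0))"
  shows "quasi_f (ribbon_of_row \<sigma> a c0) (col_reading \<sigma> (ribbon_of_row \<sigma> a))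
    = Some (col_reading \<sigma> ((ribbon_of_row \<sigma> a)(c0 := Suc (ribbon_of_row \<sigma> a c0))))"
proof -
  let ?T = "ribbon_of_row \<sigma> a" and ?L = "col_reading_cells \<sigma>"
  have "quasi_f (?T c0) (map ?T ?L) = Some (map (?T(c0 := Suc (?T c0))) ?L)"
  proof (rule quasi_f_map_eq_Some[OF sorted_wrt_col_reading_cells reads_before_irrefl])
    show "c0 \<in> set ?L" using c0 set_col_reading_cells by simp
  next
    fix y assume y: "y \<in> set ?L" "reads_before c0 y"
    show "?T y \<noteq> ?T c0"
    proof
      assume "?T y = ?T c0"
      then have "antidiag y \<le> antidiag c0" "fst y = fst c0"
        using ribbon_of_row_eq_entry[OF mono _ c0 strict] y(1) set_col_reading_cells by auto
      then show False
        using reads_before_antidiag_le[of y c0] y c0 set_col_reading_cells by auto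
    qed
  next
    fix y z assume yz: "y \<in> set ?L" "z \<in> set ?L" "reads_before y z" "?T y = Suc (?T c0)"
    show "?T z \<noteq> ?T c0"
    proof
      assume "?T z = ?T c0"
      then have z: "antidiag z \<le> antidiag c0" "fst z = fst c0"
        using ribbon_of_row_eq_entry[OF mono _ c0 strict] yz(2) set_col_reading_cells by auto
      have y: "antidiag c0 < antidiag y"
        using ribbon_of_row_Suc_entry[OF mono _ c0] yz(1,4) set_col_reading_cells by auto
      then have "fst z < fst y"
        using reads_before_antidiag_le[of z y] z yz set_col_reading_cells by auto
      moreover have "?T c0 + 1 + fst y \<le> ?T y + fst c0"
        using ribbon_of_row_antidiag_less[OF mono _ c0 y] strict y yz(1) set_col_reading_cells
          ribbon_cells_bounds(4)[of y] by auto
      ultimately show False using z yz(4) by simp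
    qed
  qed simp
  then show ?thesis by (simp add: col_reading_eq_map)
qed

lemma increment_imp_hypo_edge:
  assumes a: "admissible_row (sum_list \<sigma>) (length \<sigma>) n a"
    and b: "admissible_row (sum_list \<sigma>) (length \<sigma>) n b"
    and k: "k \<in> {1..sum_list \<sigma>}" and b_eq: "b = a(k := Suc (a k))"
  shows "(ribbon_of_row \<sigma> a, ribbon_of_row \<sigma> b) \<in> hypo_edges n \<sigma>"
proof -
  let ?T = "ribbon_of_row \<sigma> a" and ?c = "antidiag_cell k"
  have c: "?c \<in> ribbon_cells \<sigma>" "antidiag ?c = k"
    using antidiag_cell[OF k] by auto
  have Tb: "ribbon_of_row \<sigma> b = ?T(?c := Suc (?T ?c))"
    using ribbon_of_row_fun_upd[OF c(1)] c(2) b_eq by simp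
  have "antidiag ?c < sum_list \<sigma> \<Longrightarrow> a (antidiag ?c) < a (Suc (antidiag ?c))"
    using admissible_row_mono[OF b, of k "Suc k"] k c(2) b_eq by simp
  then have "quasi_f (?T ?c) (col_reading \<sigma> ?T) = Some (col_reading \<sigma> (ribbon_of_row \<sigma> b))"
    using quasi_f_col_reading_ribbon_of_row[OF admissible_row_mono_on[OF a] c(1)] Tb by simp
  moreover have "1 \<le> ?T ?c" "?T ?c \<le> n - 1"
    using qrt_bounds[OF is_qrt_ribbon_of_row[OF a] c(1)] qrt_bounds[OF is_qrt_ribbon_of_row[OF b] c(1)] Tb
    by auto
  ultimately show ?thesis
    using is_qrt_ribbon_of_row[OF a] is_qrt_ribbon_of_row[OF b]
    by (auto simp: hypo_edges_def hypo_vertices_def)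
qed

lemma hypo_edge_ribbon_of_row_iff:
  assumes "admissible_row (sum_list \<sigma>) (length \<sigma>) n a"
    and "admissible_row (sum_list \<sigma>) (length \<sigma>) n b"
  shows "(ribbon_of_row \<sigma> a, ribbon_of_row \<sigma> b) \<in> hypo_edges n \<sigma>
    \<longleftrightarrow> (\<exists>k\<in>{1..sum_list \<sigma>}. b = a(k := Suc (a k)))"
  using hypo_edge_imp_increment[OF assms] increment_imp_hypo_edge[OF assms] by blast

end

theorem corollary4p7:
  fixes \<sigma> \<tau> :: "nat list" and m n :: nat
  assumes "0 < m" and "is_composition m \<sigma>" and "is_composition m \<tau>"
    and "length \<sigma> = length \<tau>" and "0 < n"
  shows "digraph_iso (hypo_vertices n \<sigma>) (hypo_edges n \<sigma>)
           (hypo_vertices n \<tau>) (hypo_edges n \<tau>) (\<lambda>T. pi_qr \<tau> (qarray_bar \<sigma> T))"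
proof -
  have m: "sum_list \<sigma> = m" "sum_list \<tau> = m"
    using assms(2,3) by (simp_all add: is_composition_def)
  interpret \<sigma>: ribbon_shape \<sigma>
    using assms(1,2) m(1) by unfold_locales (auto simp: is_composition_def)
  interpret \<tau>: ribbon_shape \<tau>
    using assms(1,3) m(2) by unfold_locales (auto simp: is_composition_def)
  let ?A = "{a. admissible_row m (length \<sigma>) n a}"
  show ?thesis
  proof (rule digraph_iso_common_parametrization)
    show "bij_betw (ribbon_of_row \<sigma>) ?A (hypo_vertices n \<sigma>)"
      using \<sigma>.bij_betw_ribbon_of_row m by simp
    show "bij_betw (ribbon_of_row \<tau>) ?A (hypo_vertices n \<tau>)"
      using \<tau>.bij_betw_ribbon_of_row m assms(4) by simp
    show "(ribbon_of_row \<sigma> a, ribbon_of_row \<sigma> b) \<in> hypo_edges n \<sigma>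
      \<longleftrightarrow> (ribbon_of_row \<tau> a, ribbon_of_row \<tau> b) \<in> hypo_edges n \<tau>" if "a \<in> ?A" "b \<in> ?A" for a b
      using that \<sigma>.hypo_edge_ribbon_of_row_iff \<tau>.hypo_edge_ribbon_of_row_iff m assms(4) by simp
    show "pi_qr \<tau> (qarray_bar \<sigma> (ribbon_of_row \<sigma> a)) = ribbon_of_row \<tau> a" if "a \<in> ?A" for a
      using that \<sigma>.qarray_bar_ribbon_of_row \<tau>.pi_qr_qarray_of_row m by simp
  qed
qed

end
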